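(* Let $k$ be a field of characteristic $0$, let $t$ be transcendental over $k$, and let $K=k(t)$. Let $\alpha,a,b,c,d,e,f\in k$ with $a,d$ not both zero, $ae=bd$, $af\neq cd$, $b^2\neq 4ac$ and $e^2\neq 4df$. Let $\lambda\in\operatorname{Emb}(k(t))$ be a $k$-linear embedding with $\lambda(t)=\alpha+\sqrt{\frac{at^2+bt+c}{dt^2+et+f}}$ (for some square root in $\overline{K}$). If $V$ is a simple two-sided vector space over $k(t)$ corresponding to $\lambda$, then $V$ has rank $2$.
   Context: Let $k\subset K$ be fields and $\overline{K}$ a fixed algebraic closure of $K$. A two-sided vector space is a $K\otimes_k K$-module $V$; left (resp. right) multiplication by $K$ means the action of $K\otimes 1$ (resp. $1\otimes K$); ${}_KV$ and $V_K$ denote the corresponding restrictions of scalars. $V$ has rank $n$ if $\dim_K({}_KV)=\dim_K(V_K)=n$. $\operatorname{Emb}(K)$ is the set of $k$-linear field embeddings $K\to\overline{K}$; $G=\operatorname{Aut}(\overline{K}/K)$ acts on it by left composition, and $\lambda^G$ denotes the orbit. For a homomorphism $\phi:K\to M_n(K)$, $K^n_\phi$ denotes the two-sided vector space of row vectors $K^n$ with left action $x\cdot(v_1,\dots,v_n)=(xv_1,\dots,xv_n)$ and right action $v\cdot x=v\phi(x)$. For $K$ perfect and $\lambda\in\operatorname{Emb}(K)$ with $|\lambda^G|=n<\infty$, let $K(\lambda)\subset\overline{K}$ be the composite of $K$ and $\lambda(K)$ (it has $[K(\lambda):K]=n$), choose a basis $\alpha_1,\dots,\alpha_n$ of $K(\lambda)$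 over $K$, define $\lambda_i:K\to K$ by $\lambda(x)=\sum_i\lambda_i(x)\alpha_i$, define $\beta_{ijk}\in K$ by $\alpha_i\alpha_j=\sum_k\beta_{ijk}\alpha_k$, and set $\phi_{ij}(x)=\sum_{k}\beta_{jki}\lambda_k(x)$. The simple two-sided vector space corresponding to $\lambda$ is (up to isomorphism) $K^n_\phi$; by a known classification, $\lambda^G\mapsto K^n_\phi$ is a bijection from finite $G$-orbits in $\operatorname{Emb}(K)$ to isomorphism classes of simple two-sided vector spaces of finite left dimension, and this space has left dimension $|\lambda^G|$. *)

theory Defs
  imports "HOL-Analysis.Analysis" "HOL-Computational_Algebra.Fraction_Field"
begin

type_synonym 'k ratfun = "'k poly fract"

definition rf_const :: "'k::field \<Rightarrow> 'k ratfun" where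
  "rf_const c = Fract [:c:] 1"

definition rf_t :: "'k::field ratfun" where
  "rf_t = Fract [:0, 1:] 1"

text \<open>(Unital) ring homomorphisms between fields; these are automatically injective.\<close>
definition is_ring_hom :: "('a::ring_1 \<Rightarrow> 'b::ring_1) \<Rightarrow> bool" where
  "is_ring_hom f \<longleftrightarrow> f 1 = 1 \<and> (\<forall>x y. f (x + y) = f x + f y) \<and> (\<forall>x y. f (x * y) = f x * f y)"

definition is_alg_closure :: "('K::field \<Rightarrow> 'L::field) \<Rightarrow> bool" where
  "is_alg_closure \<iota> \<longleftrightarrow> is_ring_hom \<iota>
     \<and> (\<forall>p :: 'L poly. 0 < degree p \<longrightarrow> (\<exists>z. poly p z = 0))
     \<and> (\<forall>z :: 'L. \<exists>p. p \<noteq> 0 \<and> (\<forall>i. coeff p i \<in> range \<iota>) \<and> poly p z = 0)"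

definition Aut_over :: "('K::field \<Rightarrow> 'L::field) \<Rightarrow> ('L \<Rightarrow> 'L) set" where
  "Aut_over \<iota> = {\<sigma>. bij \<sigma> \<and> is_ring_hom \<sigma> \<and> (\<forall>x. \<sigma> (\<iota> x) = \<iota> x)}"

definition Emb :: "('k::field ratfun \<Rightarrow> 'L::field) \<Rightarrow> ('k ratfun \<Rightarrow> 'L) set" where
  "Emb \<iota> = {\<mu>. is_ring_hom \<mu> \<and> (\<forall>c x. \<mu> (rf_const c * x) = \<iota> (rf_const c) * \<mu> x)}"

definition orbit :: "('K::field \<Rightarrow> 'L::field) \<Rightarrow> ('K \<Rightarrow> 'L) \<Rightarrow> ('K \<Rightarrow> 'L) set" where
  "orbit \<iota> \<mu> = {\<sigma> \<circ> \<mu> | \<sigma>. \<sigma> \<in> Aut_over \<iota>}"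

definition is_subfield :: "'L::field set \<Rightarrow> bool" where
  "is_subfield F \<longleftrightarrow> 0 \<in> F \<and> 1 \<in> F \<and> (\<forall>x\<in>F. \<forall>y\<in>F. x + y \<in> F \<and> x * y \<in> F)
     \<and> (\<forall>x\<in>F. - x \<in> F) \<and> (\<forall>x\<in>F. x \<noteq> 0 \<longrightarrow> inverse x \<in> F)"

definition composite :: "('K::field \<Rightarrow> 'L::field) \<Rightarrow> ('K \<Rightarrow> 'L) \<Rightarrow> 'L set" where
  "composite \<iota> \<mu> = \<Inter>{F. is_subfield F \<and> range \<iota> \<subseteq> F \<and> range \<mu> \<subseteq> F}"

definition phi_mat :: "('n::finite \<Rightarrow> 'n \<Rightarrow> 'n \<Rightarrow> 'K::field) \<Rightarrow> ('n \<Rightarrow> 'K \<Rightarrow> 'K) \<Rightarrow> 'K \<Rightarrow> 'K ^ 'n ^ 'n" where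
  "phi_mat \<beta> lc x = (\<chi> i j. \<Sum>k\<in>UNIV. \<beta> j k i * lc k x)"

definition left_dim :: "('K::field \<Rightarrow> 'K ^ 'n ^ 'n) \<Rightarrow> nat" where
  "left_dim \<phi> = vector_space.dim (\<lambda>x (v :: 'K ^ 'n::finite). x *s v) UNIV"

definition right_dim :: "('K::field \<Rightarrow> 'K ^ 'n ^ 'n) \<Rightarrow> nat" where
  "right_dim \<phi> = vector_space.dim (\<lambda>x (v :: 'K ^ 'n::finite). vector_matrix_mult v (\<phi> x)) UNIV"

end

theory Submission
  imports Defs
begin

text \<open>Put \<open>T = \<iota>(t)\<close> and \<open>s = \<lambda>(t) - \<alpha>\<close>, so \<open>s\<^sup>2 = N(T)/D(T)\<close> with \<open>N = a t\<^sup>2 + b t + c\<close> and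
  \<open>D = d t\<^sup>2 + e t + f\<close>. Since \<open>b\<^sup>2 \<noteq> 4ac\<close> and \<open>af \<noteq> cd\<close>, \<open>N/D\<close> is not a square in \<open>k(t)\<close>, so the
  composite \<open>K(\<lambda>)\<close> is \<open>K \<oplus> K s\<close>, of dimension 2 over \<open>K\<close>; this is the left dimension.
  Clearing denominators, \<open>T\<close> satisfies a quadratic equation over \<open>\<lambda>(K)\<close>, and \<open>ae = bd\<close> ensures that
  \<open>(t - \<alpha>)\<^sup>2\<close> is not of the form \<open>N(r)/D(r)\<close>, i.e. \<open>T \<notin> \<lambda>(K)\<close>; so \<open>K(\<lambda>)\<close> is also
  \<open>\<lambda>(K) \<oplus> \<lambda>(K) T\<close>. Finally, pairing \<open>K(\<lambda>)\<close> with itself by \<open>(y, e) \<mapsto>\<close> (the \<open>1\<close>-coordinate of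
  \<open>y e\<close>) identifies \<open>K\<^sup>n\<^sub>\<phi>\<close>, with its right action, with \<open>K(\<lambda>)\<close> as a \<open>\<lambda>(K)\<close>-vector space,
  which therefore also has dimension 2.\<close>

section \<open>Field homomorphisms and subfields\<close>

locale field_hom =
  fixes h :: "'a::field \<Rightarrow> 'b::field"
  assumes hom: "is_ring_hom h"
begin

lemma hom_add [simp]: "h (x + y) = h x + h y"
  and hom_mult [simp]: "h (x * y) = h x * h y"
  and hom_1 [simp]: "h 1 = 1"
  using hom unfolding is_ring_hom_def by simp_all

lemma hom_0 [simp]: "h 0 = 0"
  using hom_add[of 0 0] by (metis add_0 add_cancel_right_right)

lemma hom_uminus [simp]: "h (- x) = - h x"
  using hom_add[of "- x" x] by (simp add: eq_neg_iff_add_eq_0)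

lemma hom_diff [simp]: "h (x - y) = h x - h y"
  by (simp only: diff_conv_add_uminus hom_add hom_uminus)

lemma hom_power [simp]: "h (x ^ n) = h x ^ n"
  by (induction n) simp_all

lemma hom_sum [simp]: "h (sum g A) = (\<Sum>i\<in>A. h (g i))"
  by (induction A rule: infinite_finite_induct) simp_all

lemma hom_inverse [simp]: "h (inverse x) = inverse (h x)"
proof (cases "x = 0")
  case False
  then have "h x * h (inverse x) = 1"
    by (simp flip: hom_mult)
  then show ?thesis
    by (rule inverse_unique[symmetric])
qed simp

lemma hom_divide [simp]: "h (x / y) = h x / h y"
  by (simp add: divide_inverse)

lemma hom_eq_0_iff [simp]: "h x = 0 \<longleftrightarrow> x = 0"
proof
  assume "h x = 0"
  then have "h (x * inverse x) = 0"
    by simp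
  then show "x = 0"
    by (metis hom_1 right_inverse zero_neq_one)
qed simp

lemma hom_eq_iff [simp]: "h x = h y \<longleftrightarrow> x = y"
  using hom_eq_0_iff[of "x - y"] by simp

lemma subfield_range: "is_subfield (range h)"
  unfolding is_subfield_def
proof (intro conjI ballI impI)
  show "0 \<in> range h" "1 \<in> range h"
    using rangeI[of h 0] rangeI[of h 1] by simp_all
  fix u v assume "u \<in> range h" "v \<in> range h"
  then obtain x y where "u = h x" "v = h y" by blast
  then show "u + v \<in> range h" "u * v \<in> range h"
    using rangeI[of h "x + y"] rangeI[of h "x * y"] by simp_all
next
  fix u assume "u \<in> range h"
  then obtain x where "u = h x" by blast
  then show "- u \<in> range h" "inverse u \<in> range h"
    using rangeI[of h "- x"] rangeI[of h "inverse x"] by simp_all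
qed

end

lemma subfield_diff: "is_subfield S \<Longrightarrow> x \<in> S \<Longrightarrow> y \<in> S \<Longrightarrow> x - y \<in> S"
  unfolding is_subfield_def by (metis diff_conv_add_uminus)

lemma subfield_divide: "is_subfield S \<Longrightarrow> x \<in> S \<Longrightarrow> y \<in> S \<Longrightarrow> x / y \<in> S"
  unfolding is_subfield_def by (metis divide_inverse inverse_zero)

lemma subfield_sum: "is_subfield S \<Longrightarrow> (\<And>i. i \<in> A \<Longrightarrow> g i \<in> S) \<Longrightarrow> sum g A \<in> S"
  by (induction A rule: infinite_finite_induct) (simp_all add: is_subfield_def)

lemma subfield_Inter: "\<forall>F\<in>\<F>. is_subfield F \<Longrightarrow> is_subfield (\<Inter>\<F>)"
  unfolding is_subfield_def by (simp add: Inter_iff)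

lemma subfield_composite: "is_subfield (composite \<iota> \<mu>)"
  unfolding composite_def by (rule subfield_Inter) blast

lemma composite_least:
  "is_subfield F \<Longrightarrow> range \<iota> \<subseteq> F \<Longrightarrow> range \<mu> \<subseteq> F \<Longrightarrow> composite \<iota> \<mu> \<subseteq> F"
  unfolding composite_def by blast

lemma range_subset_composite: "range \<iota> \<union> range \<mu> \<subseteq> composite \<iota> \<mu>"
  unfolding composite_def by auto

lemma Fract_pCons: "Fract (pCons a P) 1 = rf_const a + rf_t * Fract P 1"
proof -
  have "pCons a P = [:a:] + [:0, 1:] * P"
    by (simp add: poly_eq_iff coeff_pCons split: nat.splits)
  then show ?thesis
    by (simp add: rf_const_def rf_t_def mult_fract)
qed

lemma ratfun_hom_in_subfield:
  assumes "is_ring_hom (h :: 'k::field ratfun \<Rightarrow> 'b::field)" and S: "is_subfield S"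
    and const: "\<And>c. h (rf_const c) \<in> S" and t: "h rf_t \<in> S"
  shows "h x \<in> S"
proof -
  interpret field_hom h using assms(1) by (rule field_hom.intro)
  have poly: "h (Fract P 1) \<in> S" for P
  proof (induction P)
    case 0
    then show ?case using S by (simp add: is_subfield_def flip: Zero_fract_def)
  next
    case (pCons a P)
    then show ?case using S const t by (simp add: Fract_pCons is_subfield_def)
  qed
  obtain P Q where "x = Fract P Q" "Q \<noteq> 0" by (cases x) auto
  then have "h x = h (Fract P 1) / h (Fract Q 1)"
    by (simp add: divide_fract flip: hom_divide)
  then show ?thesis
    using poly[of P] poly[of Q] by (simp add: subfield_divide[OF S])
qed

section \<open>Quadratic extensions\<close>

definition adjoin :: "'a::field set \<Rightarrow> 'a \<Rightarrow> 'a set" where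
  "adjoin R T = {x + y * T | x y. x \<in> R \<and> y \<in> R}"

lemma adjoin_memI: "x \<in> R \<Longrightarrow> y \<in> R \<Longrightarrow> x + y * T \<in> adjoin R T"
  unfolding adjoin_def by blast

lemma adjoin_coords_unique:
  assumes R: "is_subfield R" and T: "T \<notin> R"
    and "x \<in> R" "y \<in> R" "x' \<in> R" "y' \<in> R" and eq: "x + y * T = x' + y' * T"
  shows "x = x' \<and> y = y'"
proof (cases "y = y'")
  case False
  from eq have "T = (x' - x) / (y - y')"
    using False by (simp add: field_simps)
  then have "T \<in> R"
    using assms by (simp add: subfield_diff subfield_divide)
  with T show ?thesis by simp
qed (use eq in simp)

text \<open>This is the norm of \<open>x + y T\<close>. If it vanished, \<open>-x/y\<close> and \<open>B + x/y\<close> would be the two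
  roots of \<open>X\<^sup>2 - B X - A\<close>, and \<open>T\<close> would be one of them.\<close>
lemma quadratic_norm_nonzero:
  assumes R: "is_subfield R" and "A \<in> R" "B \<in> R" and T2: "T * T = A + B * T" and T: "T \<notin> R"
    and "x \<in> R" "y \<in> R" and nz: "x + y * T \<noteq> 0"
  shows "x * x + x * y * B - y * y * A \<noteq> 0"
proof
  assume norm: "x * x + x * y * B - y * y * A = 0"
  have "y \<noteq> 0"
    using norm nz by auto
  define \<rho> where "\<rho> = - x / y"
  have "x / y \<in> R"
    using assms by (simp add: subfield_divide)
  then have \<rho>: "\<rho> \<in> R" "B - \<rho> \<in> R"
    using R \<open>B \<in> R\<close> unfolding \<rho>_def by (simp_all add: is_subfield_def subfield_diff)
  have "y * y * (\<rho> * \<rho> - B * \<rho> - A) = x * x + x * y * B - y * y * A"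
    using \<open>y \<noteq> 0\<close> unfolding \<rho>_def by (simp add: field_simps)
  then have "\<rho> * \<rho> - B * \<rho> - A = 0"
    using norm \<open>y \<noteq> 0\<close> by simp
  then have "(T - \<rho>) * (T - (B - \<rho>)) = 0"
    using T2 by (simp add: algebra_simps)
  then show False
    using T \<rho> by auto
qed

lemma quadratic_inverse:
  fixes T :: "'a::field"
  assumes T2: "T * T = A + B * T" and n: "n = x * x + x * y * B - y * y * A" "n \<noteq> 0"
  shows "inverse (x + y * T) = (x + y * B) / n + (- y / n) * T"
proof -
  have "(x + y * T) * ((x + y * B) - y * T) = x * x + x * y * B + y * y * B * T - y * y * (T * T)"
    by (simp add: algebra_simps)
  also have "\<dots> = n"
    unfolding T2 n(1) by (simp add: algebra_simps)
  finally have "(x + y * T) * (((x + y * B) - y * T) / n) = 1"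
    using n(2) by (metis divide_self times_divide_eq_right)
  then have "inverse (x + y * T) = ((x + y * B) - y * T) / n"
    by (rule inverse_unique)
  then show ?thesis
    by (simp add: diff_divide_distrib)
qed

lemma subfield_adjoin:
  assumes R: "is_subfield R" and A: "A \<in> R" and B: "B \<in> R" and T2: "T * T = A + B * T"
    and T: "T \<notin> R"
  shows "is_subfield (adjoin R T)"
proof -
  have R0: "0 \<in> R" and R1: "1 \<in> R" and RR: "\<And>x y. x \<in> R \<Longrightarrow> y \<in> R \<Longrightarrow> x + y \<in> R \<and> x * y \<in> R"
    and Rneg: "\<And>x. x \<in> R \<Longrightarrow> - x \<in> R"
    using R unfolding is_subfield_def by auto
  show ?thesis
    unfolding is_subfield_def
  proof (intro conjI ballI impI)
    show "0 \<in> adjoin R T" "1 \<in> adjoin R T"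
      using adjoin_memI[OF R0 R0, of T] adjoin_memI[OF R1 R0, of T] by simp_all
    fix u v assume "u \<in> adjoin R T" "v \<in> adjoin R T"
    then obtain x y x' y' where u: "u = x + y * T" and v: "v = x' + y' * T"
      and xy: "x \<in> R" "y \<in> R" "x' \<in> R" "y' \<in> R"
      unfolding adjoin_def by blast
    have "u + v = (x + x') + (y + y') * T"
      unfolding u v by (simp add: algebra_simps)
    then show "u + v \<in> adjoin R T"
      using xy RR by (simp add: adjoin_memI)
    have "u * v = x * x' + (x * y' + y * x') * T + y * y' * (T * T)"
      unfolding u v by (simp add: algebra_simps)
    also have "\<dots> = (x * x' + y * y' * A) + (x * y' + y * x' + y * y' * B) * T"
      unfolding T2 by (simp add: algebra_simps)
    finally show "u * v \<in> adjoin R T"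
      using xy A B RR by (simp add: adjoin_memI)
  next
    fix u assume "u \<in> adjoin R T"
    then obtain x y where u: "u = x + y * T" and xy: "x \<in> R" "y \<in> R"
      unfolding adjoin_def by blast
    show "- u \<in> adjoin R T"
      using adjoin_memI[OF Rneg Rneg, OF xy] by (simp add: u)
    assume "u \<noteq> 0"
    define n where "n = x * x + x * y * B - y * y * A"
    have "n \<noteq> 0"
      using quadratic_norm_nonzero[OF assms xy] \<open>u \<noteq> 0\<close> by (simp add: n_def u)
    then have inv: "inverse u = (x + y * B) / n + (- y / n) * T"
      unfolding u using n_def by (intro quadratic_inverse[OF T2])
    have "n \<in> R"
      using xy A B RR unfolding n_def by (simp add: subfield_diff[OF R])
    then have "(x + y * B) / n \<in> R" "- y / n \<in> R"
      using xy B RR Rneg by (simp_all add: subfield_divide[OF R])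
    then show "inverse u \<in> adjoin R T"
      unfolding inv by (rule adjoin_memI)
  qed
qed

lemma composite_commute: "composite \<iota> \<mu> = composite \<mu> \<iota>"
  unfolding composite_def by (rule arg_cong[where f = Inter]) blast

lemma composite_eq_adjoin:
  assumes "is_ring_hom \<iota>" "is_subfield (adjoin (range \<iota>) X)" "X \<in> composite \<iota> \<mu>"
    and "range \<mu> \<subseteq> adjoin (range \<iota>) X"
  shows "composite \<iota> \<mu> = adjoin (range \<iota>) X"
proof
  interpret field_hom \<iota> using assms(1) by (rule field_hom.intro)
  have "\<iota> x + \<iota> 0 * X \<in> adjoin (range \<iota>) X" for x
    by (intro adjoin_memI rangeI)
  then have "range \<iota> \<subseteq> adjoin (range \<iota>) X"
    by auto
  with assms show "composite \<iota> \<mu> \<subseteq> adjoin (range \<iota>) X"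
    by (intro composite_least)
  show "adjoin (range \<iota>) X \<subseteq> composite \<iota> \<mu>"
  proof
    fix y assume "y \<in> adjoin (range \<iota>) X"
    then obtain u v where y: "y = \<iota> u + \<iota> v * X"
      unfolding adjoin_def by blast
    have "\<iota> u \<in> composite \<iota> \<mu>" "\<iota> v \<in> composite \<iota> \<mu>"
      using range_subset_composite[of \<iota> \<mu>] by (simp_all add: image_subset_iff)
    then show "y \<in> composite \<iota> \<mu>"
      using assms(3) subfield_composite[of \<iota> \<mu>] unfolding y is_subfield_def by simp
  qed
qed

section \<open>Coprime polynomials and quadratic ratios\<close>

text \<open>Coprimality in the Bezout sense: the library's \<open>coprime\<close> lemmas for polynomials need a gcd
  structure on the coefficients, which an arbitrary field does not carry.\<close>
definition bezout_coprime :: "'a::comm_ring_1 \<Rightarrow> 'a \<Rightarrow> bool" where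
  "bezout_coprime A C \<longleftrightarrow> (\<exists>u v. u * A + v * C = 1)"

lemma bezout_coprime_commute: "bezout_coprime A C \<Longrightarrow> bezout_coprime C A"
  unfolding bezout_coprime_def by (metis add.commute)

lemma bezout_coprime_mult_left:
  assumes "bezout_coprime A C" "bezout_coprime B C"
  shows "bezout_coprime (A * B) C"
proof -
  obtain u v u' v' where "u * A + v * C = 1" "u' * B + v' * C = 1"
    using assms unfolding bezout_coprime_def by blast
  moreover have "(u * u') * (A * B) + (u * A * v' + v * (u' * B) + v * v' * C) * C
      = (u * A + v * C) * (u' * B + v' * C)"
    by (simp add: algebra_simps)
  ultimately have "(u * u') * (A * B) + (u * A * v' + v * (u' * B) + v * v' * C) * C = 1"
    by simp
  then show ?thesis
    unfolding bezout_coprime_def by blast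
qed

lemma bezout_coprime_square:
  "bezout_coprime A C \<Longrightarrow> bezout_coprime (A * A) (C * C)"
  by (meson bezout_coprime_commute bezout_coprime_mult_left)

lemma bezout_coprime_dvd_mult:
  assumes "bezout_coprime A C" "A dvd B * C"
  shows "A dvd B"
proof -
  obtain u v k where "u * A + v * C = 1" "B * C = A * k"
    using assms unfolding bezout_coprime_def dvd_def by blast
  then have "B = B * (u * A + v * C)"
    by simp
  also have "\<dots> = A * (B * u) + v * (B * C)"
    by (simp add: algebra_simps)
  also have "\<dots> = A * (B * u + v * k)"
    unfolding \<open>B * C = A * k\<close> by (simp add: algebra_simps)
  finally show ?thesis
    by (rule dvdI)
qed

lemma bezout_coprime_add_mult:
  assumes "bezout_coprime A C"
  shows "bezout_coprime (A + C * X) C"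
proof -
  obtain u v where "u * A + v * C = 1"
    using assms unfolding bezout_coprime_def by blast
  moreover have "u * (A + C * X) + (v - u * X) * C = u * A + v * C"
    by (simp add: algebra_simps)
  ultimately show ?thesis
    unfolding bezout_coprime_def by metis
qed

lemma bezout_coprime_smult:
  assumes "bezout_coprime A C" "c \<noteq> 0"
  shows "bezout_coprime (smult c A) (C :: 'a::field poly)"
proof -
  obtain u v where "u * A + v * C = 1"
    using assms unfolding bezout_coprime_def by blast
  moreover have "smult (inverse c) u * smult c A = u * A"
    using assms(2) by simp
  ultimately show ?thesis
    unfolding bezout_coprime_def by metis
qed

text \<open>The nonzero element of least degree in the ideal \<open>(P, Q)\<close> divides both.\<close>
lemma bezout_common_factor:
  fixes P Q :: "'a::field poly"
  assumes "Q \<noteq> 0"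
  shows "\<exists>g P' Q'. P = g * P' \<and> Q = g * Q' \<and> bezout_coprime P' Q'"
proof -
  define I where "I = {u * P + v * Q | u v. True}"
  have I: "P \<in> I" "Q \<in> I"
    unfolding I_def by (metis (mono_tags, lifting) add_0 add_0_right mem_Collect_eq mult_1 mult_zero_left)+
  obtain g where g: "g \<in> I" "g \<noteq> 0" and least: "\<And>h. h \<in> I \<Longrightarrow> h \<noteq> 0 \<Longrightarrow> degree g \<le> degree h"
    using ex_has_least_nat[of "\<lambda>h. h \<in> I \<and> h \<noteq> 0" Q degree] I(2) assms by blast
  obtain u v where uv: "g = u * P + v * Q"
    using g(1) unfolding I_def by blast
  have "g dvd h" if hI: "h \<in> I" for h
  proof (rule ccontr)
    assume "\<not> g dvd h"
    then have "h mod g \<noteq> 0"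
      by (simp add: mod_eq_0_iff_dvd)
    obtain u' v' where "h = u' * P + v' * Q"
      using hI unfolding I_def by blast
    then have "h mod g = (u' - (h div g) * u) * P + (v' - (h div g) * v) * Q"
      by (simp add: minus_div_mult_eq_mod[symmetric] uv algebra_simps)
    then have "h mod g \<in> I"
      unfolding I_def by blast
    with least[OF this \<open>h mod g \<noteq> 0\<close>] degree_mod_less[OF g(2), of h] \<open>h mod g \<noteq> 0\<close>
    show False by simp
  qed
  then obtain P' Q' where PQ: "P = g * P'" "Q = g * Q'"
    using I by (meson dvdE)
  have "g * (u * P' + v * Q') = g * 1"
    using uv PQ by (simp add: algebra_simps)
  then have "u * P' + v * Q' = 1"
    using g(2) by simp
  then show ?thesis
    using PQ unfolding bezout_coprime_def by blast
qed

lemma Fract_bezout_coprime: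
  "\<exists>P Q. Q \<noteq> 0 \<and> bezout_coprime P Q \<and> r = Fract P (Q :: 'a::field poly)"
proof -
  obtain P0 Q0 where r: "r = Fract P0 Q0" "Q0 \<noteq> 0"
    by (cases r) auto
  then obtain g P Q where g: "P0 = g * P" "Q0 = g * Q" "bezout_coprime P Q"
    using bezout_common_factor by blast
  with r have "g \<noteq> 0" "Q \<noteq> 0"
    by auto
  then have "r = Fract P Q"
    using r g by (simp add: eq_fract)
  then show ?thesis
    using g \<open>Q \<noteq> 0\<close> by blast
qed

lemma degree_le_1_eq: "degree p \<le> 1 \<Longrightarrow> p = [:coeff p 0, coeff p 1:]"
  by (auto simp: poly_eq_iff coeff_pCons split: nat.splits intro: coeff_eq_0)

lemma smult_square_discriminant:
  fixes Q :: "'a::idom poly"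
  assumes "smult \<gamma> (Q * Q) = [:c0, c1, c2:]"
  shows "c1\<^sup>2 = 4 * c0 * c2"
proof (cases "\<gamma> = 0 \<or> Q = 0")
  case True
  then show ?thesis
    using assms by auto
next
  case False
  have "degree [:c0, c1, c2:] \<le> 2"
    by (rule degree_le) (auto simp: coeff_pCons split: nat.splits)
  then have "2 * degree Q \<le> 2"
    using assms False by (metis degree_mult_eq degree_smult_eq mult_2)
  then have "Q = [:coeff Q 0, coeff Q 1:]"
    by (intro degree_le_1_eq) simp
  then have "[:c0, c1, c2:] = smult \<gamma> ([:coeff Q 0, coeff Q 1:] * [:coeff Q 0, coeff Q 1:])"
    using assms by metis
  then have "c0 = \<gamma> * coeff Q 0 ^ 2" "c1 = 2 * \<gamma> * coeff Q 0 * coeff Q 1" "c2 = \<gamma> * coeff Q 1 ^ 2"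
    by (simp_all add: algebra_simps power2_eq_square)
  then show ?thesis
    by (simp add: algebra_simps power2_eq_square)
qed

lemma bezout_coprime_square_ratio:
  fixes P Q N D :: "'a::idom poly"
  assumes PQ: "bezout_coprime P Q" and "Q \<noteq> 0" "N \<noteq> 0" and eq: "P * P * D = N * (Q * Q)"
  shows "\<exists>R. N = P * P * R \<and> D = Q * Q * R"
proof -
  have cop: "bezout_coprime (P * P) (Q * Q)"
    using PQ by (rule bezout_coprime_square)
  have "P * P dvd N * (Q * Q)"
    using eq by (metis dvd_triv_left)
  then obtain R where R: "N = P * P * R"
    using bezout_coprime_dvd_mult[OF cop] by blast
  have "Q * Q dvd D * (P * P)"
    using eq by (metis dvd_triv_right mult.commute)
  then obtain R' where R': "D = Q * Q * R'"
    using bezout_coprime_dvd_mult[OF bezout_coprime_commute[OF cop]] by blast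
  have "P \<noteq> 0"
    using R \<open>N \<noteq> 0\<close> by auto
  have "(P * P * (Q * Q)) * R' = (P * P * (Q * Q)) * R"
    using eq unfolding R R' by (simp add: ac_simps)
  then have "R' = R"
    using \<open>P \<noteq> 0\<close> \<open>Q \<noteq> 0\<close> by simp
  then show ?thesis
    using R R' by blast
qed

text \<open>Cancelling squares, \<open>N = P\<^sup>2 R\<close> and \<open>D = Q\<^sup>2 R\<close>. Counting degrees, either \<open>R\<close> is constant and
  \<open>N\<close> is a scaled square (zero discriminant), or \<open>P, Q\<close> are constant and \<open>N, D\<close> are proportional.\<close>
lemma quadratic_ratio_not_square_poly:
  fixes a b c d e f :: "'a::field"
  assumes a: "a \<noteq> 0" and d: "d \<noteq> 0" and af: "a * f \<noteq> c * d" and disc: "b\<^sup>2 \<noteq> 4 * a * c"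
    and PQ: "bezout_coprime P Q" and Q: "Q \<noteq> 0"
  shows "P * P * [:f, e, d:] \<noteq> [:c, b, a:] * (Q * Q)"
proof
  assume eq: "P * P * [:f, e, d:] = [:c, b, a:] * (Q * Q)"
  have "[:c, b, a:] \<noteq> 0"
    using a by simp
  then obtain R where N: "[:c, b, a:] = P * P * R" and D: "[:f, e, d:] = Q * Q * R"
    using bezout_coprime_square_ratio[OF PQ Q _ eq] by blast
  have "P \<noteq> 0" "R \<noteq> 0"
    using N a by auto
  have degs: "2 = 2 * degree P + degree R" "2 = 2 * degree Q + degree R"
    using arg_cong[OF N, of degree] arg_cong[OF D, of degree] a d Q \<open>P \<noteq> 0\<close> \<open>R \<noteq> 0\<close>
    by (simp_all add: degree_mult_eq)
  show False
  proof (cases "degree R = 0")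
    case True
    then obtain r where "R = [:r:]"
      by (auto elim: degree_eq_zeroE)
    then have "smult r (P * P) = [:c, b, a:]"
      using N by (simp add: ac_simps)
    then have "b\<^sup>2 = 4 * a * c"
      by (simp add: smult_square_discriminant mult.commute)
    with disc show False ..
  next
    case False
    then have "degree P = 0" "degree Q = 0"
      using degs by auto
    then obtain p q where "P = [:p:]" "Q = [:q:]"
      by (auto elim!: degree_eq_zeroE)
    then have "smult (q * q) [:c, b, a:] = smult (p * p) [:f, e, d:]"
      using N D by (simp add: ac_simps)
    then have "q * q * c = p * p * f" "q * q * a = p * p * d"
      by simp_all
    moreover have "(q * q) * (p * p) * (a * f - c * d) = (q * q * a) * (p * p * f) - (q * q * c) * (p * p * d)"
      by (simp add: algebra_simps)
    ultimately have "(q * q) * (p * p) * (a * f - c * d) = 0"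
      by simp
    then show False
      using af \<open>P \<noteq> 0\<close> Q \<open>P = [:p:]\<close> \<open>Q = [:q:]\<close> by simp
  qed
qed

definition homog_quadratic :: "'a::comm_ring_1 \<Rightarrow> 'a \<Rightarrow> 'a \<Rightarrow> 'a poly \<Rightarrow> 'a poly \<Rightarrow> 'a poly" where
  "homog_quadratic a b c P Q = smult a (P * P) + smult b (P * Q) + smult c (Q * Q)"

lemma bezout_coprime_homog_quadratic:
  assumes "bezout_coprime P Q" "d \<noteq> 0"
  shows "bezout_coprime (homog_quadratic d e f P Q) (Q * Q :: 'a::field poly)"
proof -
  have "bezout_coprime (smult d (P * P) + Q * (smult e P + smult f Q)) Q"
    using assms by (intro bezout_coprime_add_mult bezout_coprime_smult)
      (meson bezout_coprime_commute bezout_coprime_mult_left)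
  then have "bezout_coprime (homog_quadratic d e f P Q) Q"
    by (simp add: homog_quadratic_def algebra_simps)
  then show ?thesis
    by (meson bezout_coprime_commute bezout_coprime_mult_left)
qed

text \<open>With \<open>N, D\<close> the homogenised numerator and denominator at \<open>P/Q\<close>, the hypothesis
  \<open>a e = b d\<close> gives \<open>d N - a D = (c d - a f) Q\<^sup>2\<close>; so if \<open>N = (X - \<alpha>)\<^sup>2 D\<close>, then \<open>D\<close>,
  being coprime to \<open>Q\<close>, is a constant, and \<open>(c d - a f) Q\<^sup>2\<close> would be a multiple of
  \<open>d (X - \<alpha>)\<^sup>2 - a\<close>, whose discriminant \<open>4 a d\<close> is nonzero.\<close>
lemma shifted_square_ne_quadratic_ratio_poly:
  fixes a b c d e f \<alpha> :: "'a::field_char_0"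
  assumes a: "a \<noteq> 0" and d: "d \<noteq> 0" and ae: "a * e = b * d" and af: "a * f \<noteq> c * d"
    and PQ: "bezout_coprime P Q" and Q: "Q \<noteq> 0"
  shows "homog_quadratic a b c P Q \<noteq> [:\<alpha>\<^sup>2, - 2 * \<alpha>, 1:] * homog_quadratic d e f P Q"
proof
  define W where "W = [:\<alpha>\<^sup>2, - 2 * \<alpha>, 1:]"
  define Dt where "Dt = homog_quadratic d e f P Q"
  define \<gamma> where "\<gamma> = c * d - a * f"
  assume "homog_quadratic a b c P Q = W * Dt"
  moreover have "smult \<gamma> (Q * Q) = smult d (homog_quadratic a b c P Q) - smult a Dt"
  proof -
    have "e = b * d / a"
      using ae a by (simp add: field_simps)
    then show ?thesis
      using a by (simp add: poly_eq_iff Dt_def \<gamma>_def homog_quadratic_def field_simps)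
  qed
  ultimately have key: "smult \<gamma> (Q * Q) = (smult d W - [:a:]) * Dt"
    by (simp add: algebra_simps)
  have "bezout_coprime Dt (Q * Q)"
    unfolding Dt_def using PQ d by (rule bezout_coprime_homog_quadratic)
  moreover have "Dt dvd smult \<gamma> (Q * Q)"
    unfolding key by simp
  then have "Dt dvd 1 * (Q * Q)"
    using af by (simp add: \<gamma>_def dvd_smult_iff)
  ultimately have "Dt dvd 1"
    by (rule bezout_coprime_dvd_mult)
  then have "Dt \<noteq> 0"
    by auto
  with \<open>Dt dvd 1\<close> have "degree Dt = 0"
    by (simp add: is_unit_iff_degree)
  with \<open>Dt \<noteq> 0\<close> obtain u where u: "Dt = [:u:]" "u \<noteq> 0"
    by (auto elim: degree_eq_zeroE)
  then have "smult \<gamma> (Q * Q) = [:u * (d * \<alpha>\<^sup>2 - a), - 2 * d * u * \<alpha>, d * u:]"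
    using key by (simp add: W_def algebra_simps)
  then have "(- 2 * d * u * \<alpha>)\<^sup>2 = 4 * (u * (d * \<alpha>\<^sup>2 - a)) * (d * u)"
    by (rule smult_square_discriminant)
  then have "4 * a * d * (u * u) = 0"
    by (simp add: algebra_simps power2_eq_square)
  then show False
    using a d u by simp
qed

section \<open>Quadratic expressions in \<open>k(t)\<close>\<close>

definition rf_quadratic :: "'k::field \<Rightarrow> 'k \<Rightarrow> 'k \<Rightarrow> 'k ratfun \<Rightarrow> 'k ratfun" where
  "rf_quadratic a b c x = rf_const a * x\<^sup>2 + rf_const b * x + rf_const c"

lemma rf_quadratic_Fract:
  "Q \<noteq> 0 \<Longrightarrow> rf_quadratic a b c (Fract P Q) = Fract (homog_quadratic a b c P Q) (Q * Q)"
  unfolding rf_quadratic_def homog_quadratic_def rf_const_def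
  by (simp add: power2_eq_square mult_fract add_fract eq_fract algebra_simps)

lemma rf_quadratic_t: "rf_quadratic a b c rf_t = Fract [:c, b, a:] 1"
  unfolding rf_quadratic_def rf_const_def rf_t_def
  by (simp add: power2_eq_square mult_fract add_fract)

lemma rf_quadratic_ratio_ne_const_ratio:
  fixes a b c d e f :: "'k::field"
  assumes "a \<noteq> 0" "d \<noteq> 0" "a * f \<noteq> c * d"
  shows "rf_quadratic a b c rf_t / rf_quadratic d e f rf_t \<noteq> rf_const a / rf_const d"
  using assms by (simp add: rf_quadratic_t rf_const_def eq_fract algebra_simps)

lemma rf_quadratic_ratio_not_square:
  fixes a b c d e f :: "'k::field"
  assumes a: "a \<noteq> 0" and d: "d \<noteq> 0" and af: "a * f \<noteq> c * d" and disc: "b\<^sup>2 \<noteq> 4 * a * c"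
  shows "r\<^sup>2 \<noteq> rf_quadratic a b c rf_t / rf_quadratic d e f rf_t"
proof
  assume sq: "r\<^sup>2 = rf_quadratic a b c rf_t / rf_quadratic d e f rf_t"
  obtain P Q where PQ: "Q \<noteq> 0" "bezout_coprime P Q" "r = Fract P Q"
    using Fract_bezout_coprime by blast
  have "Fract (P * P) (Q * Q) = Fract [:c, b, a:] [:f, e, d:]"
    using sq PQ by (simp add: rf_quadratic_t power2_eq_square)
  then have "P * P * [:f, e, d:] = [:c, b, a:] * (Q * Q)"
    using PQ d by (simp add: eq_fract)
  then show False
    using quadratic_ratio_not_square_poly[OF a d af disc PQ(2,1)] by simp
qed

lemma rf_shifted_square_ne_quadratic_ratio:
  fixes a b c d e f \<alpha> :: "'k::field_char_0"
  assumes a: "a \<noteq> 0" and d: "d \<noteq> 0" and ae: "a * e = b * d" and af: "a * f \<noteq> c * d"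
  shows "(rf_t - rf_const \<alpha>)\<^sup>2 \<noteq> rf_quadratic a b c r / rf_quadratic d e f r"
proof
  assume eq: "(rf_t - rf_const \<alpha>)\<^sup>2 = rf_quadratic a b c r / rf_quadratic d e f r"
  define W where "W = [:\<alpha>\<^sup>2, - 2 * \<alpha>, 1:]"
  obtain P Q where PQ: "Q \<noteq> 0" "bezout_coprime P Q" "r = Fract P Q"
    using Fract_bezout_coprime by blast
  define N where "N = homog_quadratic a b c P Q"
  define D where "D = homog_quadratic d e f P Q"
  have QQ: "Q * Q \<noteq> 0"
    using PQ by simp
  have "(rf_t - rf_const \<alpha>)\<^sup>2 = Fract W 1"
    unfolding W_def rf_const_def rf_t_def by (simp add: power2_eq_square mult_fract add_fract algebra_simps)
  with eq have eq': "Fract W 1 = Fract N (Q * Q) / Fract D (Q * Q)"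
    unfolding N_def D_def PQ(3) using PQ(1) by (simp add: rf_quadratic_Fract)
  show False
  proof (cases "D = 0")
    case True
    with eq' show False
      by (simp add: W_def eq_fract Zero_fract_def)
  next
    case False
    with eq' QQ have "(Q * Q) * (W * D) = (Q * Q) * N"
      by (simp add: eq_fract algebra_simps)
    then have "N = W * D"
      using QQ by simp
    then show False
      using shifted_square_ne_quadratic_ratio_poly[OF a d ae af PQ(2,1)]
      unfolding N_def D_def W_def by blast
  qed
qed

section \<open>Dimensions of spaces of row vectors\<close>

lemma vec_linear_inj_card_le:
  fixes f :: "'a::field ^ 'm \<Rightarrow> 'a ^ 'n"
  assumes "Vector_Spaces.linear (*s) (*s) f" "inj f"
  shows "CARD('m) \<le> CARD('n)"
proof -
  have "vec.dim (range f) = vec.dim (UNIV :: ('a ^ 'm) set)"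
    using assms by (intro vec.dim_image_eq) (auto intro: inj_on_subset)
  then show ?thesis
    using vec.dim_subset[of "range f" UNIV] by (simp add: vec.dim_UNIV card_cart_basis)
qed

lemma vec_linear_inj_imp_surj:
  fixes f :: "'a::field ^ 'm \<Rightarrow> 'a ^ 'n"
  assumes lin: "Vector_Spaces.linear (*s) (*s) f" and "inj f" and "CARD('m) = CARD('n)"
  shows "surj f"
proof -
  have "vec.dim (range f) = vec.dim (UNIV :: ('a ^ 'm) set)"
    using assms by (intro vec.dim_image_eq) (auto intro: inj_on_subset)
  then have "vec.span (range f) = UNIV"
    unfolding vec.dim_eq_full[symmetric] vec.dimension_def card_cart_basis
    using assms(3) by (simp add: vec.dim_UNIV card_cart_basis)
  moreover have "vec.span (range f) = range f"
  proof -
    interpret f: Vector_Spaces.linear "(*s)" "(*s)" f by (fact lin)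
    show ?thesis
      using f.span_image[of UNIV] by simp
  qed
  ultimately show ?thesis
    by simp
qed

lemma vector_space_transport:
  fixes F :: "'a::field ^ 'm \<Rightarrow> 'v::ab_group_add" and r :: "'a \<Rightarrow> 'v \<Rightarrow> 'v"
  assumes bij: "bij F" and add: "\<And>w w'. F (w + w') = F w + F w'"
    and scale: "\<And>x w. F (x *s w) = r x (F w)"
  shows "vector_space r" and "vector_space.dim r UNIV = CARD('m)"
proof -
  have F_onto: "\<exists>w. u = F w" for u
    using bij by (metis bij_pointE)
  show vs: "vector_space r"
  proof
    fix x y :: 'a and u u' :: 'v
    obtain w w' where "u = F w" "u' = F w'"
      using F_onto by metis
    then show "r x (u + u') = r x u + r x u'" "r (x + y) u = r x u + r y u"
      "r x (r y u) = r (x * y) u" "r 1 u = u"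
      by (simp_all flip: add scale add: vec.scale_right_distrib vec.scale_left_distrib)
  qed
  interpret r: vector_space r by (fact vs)
  interpret pair: finite_dimensional_vector_space_pair_1 "(*s)" cart_basis r
    by unfold_locales
  have "Vector_Spaces.linear (*s) r F"
    by unfold_locales (simp_all add: add scale)
  then have "r.dim (range F) = vec.dim (UNIV :: ('a ^ 'm) set)"
    using bij by (intro pair.dim_image_eq) (auto simp: bij_def intro: inj_on_subset)
  then show "r.dim UNIV = CARD('m)"
    using bij by (simp add: bij_def vec.dim_UNIV card_cart_basis)
qed

section \<open>Composites quadratic over both factors\<close>

locale quadratic_composite =
  fixes \<iota> \<mu> :: "'K::field \<Rightarrow> 'L::field" and s T :: 'L and q :: 'K
  assumes iota_hom: "is_ring_hom \<iota>" and mu_hom: "is_ring_hom \<mu>"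
    and s_square: "s * s = \<iota> q" and s_notin: "s \<notin> range \<iota>" and T_notin: "T \<notin> range \<mu>"
    and composite_iota: "composite \<iota> \<mu> = adjoin (range \<iota>) s"
    and composite_mu: "composite \<iota> \<mu> = adjoin (range \<mu>) T"
begin

sublocale iota: field_hom \<iota> by (fact field_hom.intro[OF iota_hom])
sublocale mu: field_hom \<mu> by (fact field_hom.intro[OF mu_hom])

abbreviation C :: "'L set" where "C \<equiv> composite \<iota> \<mu>"

lemma q_nonzero: "q \<noteq> 0"
  using s_square s_notin rangeI[of \<iota> 0] by auto

lemma iota_in_C: "\<iota> x \<in> C"
  using range_subset_composite[of \<iota> \<mu>] by (simp_all add: image_subset_iff)

lemma C_closed: "y \<in> C \<Longrightarrow> y' \<in> C \<Longrightarrow> y + y' \<in> C \<and> y * y' \<in> C"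
  using subfield_composite[of \<iota> \<mu>] unfolding is_subfield_def by simp

lemma iota_lincomb_in_C: "\<iota> x + \<iota> z * s \<in> C"
  unfolding composite_iota by (intro adjoin_memI rangeI)

lemma iota_coords_unique: "\<iota> x + \<iota> z * s = \<iota> x' + \<iota> z' * s \<Longrightarrow> x = x' \<and> z = z'"
  using adjoin_coords_unique[OF iota.subfield_range s_notin rangeI rangeI rangeI rangeI] by simp

lemma mu_coords_unique: "\<mu> x + \<mu> z * T = \<mu> x' + \<mu> z' * T \<Longrightarrow> x = x' \<and> z = z'"
  using adjoin_coords_unique[OF mu.subfield_range T_notin rangeI rangeI rangeI rangeI] by simp

text \<open>Coordinates with respect to the basis \<open>1, s\<close> of \<open>C\<close> over \<open>\<iota>(K)\<close>; arbitrary outside \<open>C\<close>.\<close>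
definition coord_1 :: "'L \<Rightarrow> 'K" where
  "coord_1 y = (THE x. \<exists>z. y = \<iota> x + \<iota> z * s)"

definition coord_s :: "'L \<Rightarrow> 'K" where
  "coord_s y = (THE z. \<exists>x. y = \<iota> x + \<iota> z * s)"

lemma coord_1_eq [simp]: "coord_1 (\<iota> x + \<iota> z * s) = x"
  unfolding coord_1_def by (rule the1_equality) (use iota_coords_unique in blast)+

lemma coord_s_eq [simp]: "coord_s (\<iota> x + \<iota> z * s) = z"
  unfolding coord_s_def by (rule the1_equality) (use iota_coords_unique in blast)+

lemma C_coords: "y \<in> C \<Longrightarrow> y = \<iota> (coord_1 y) + \<iota> (coord_s y) * s"
  unfolding composite_iota adjoin_def by auto

lemma coords_lincomb:
  assumes "y \<in> C" "y' \<in> C"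
  shows "coord_1 (\<iota> c * y + \<iota> c' * y') = c * coord_1 y + c' * coord_1 y'"
    and "coord_s (\<iota> c * y + \<iota> c' * y') = c * coord_s y + c' * coord_s y'"
proof -
  obtain x z x' z' where y: "y = \<iota> x + \<iota> z * s" and y': "y' = \<iota> x' + \<iota> z' * s"
    using C_coords assms by blast
  have lincomb: "\<iota> c * y + \<iota> c' * y' = \<iota> (c * x + c' * x') + \<iota> (c * z + c' * z') * s"
    unfolding y y' by (simp add: algebra_simps)
  show "coord_1 (\<iota> c * y + \<iota> c' * y') = c * coord_1 y + c' * coord_1 y'"
    and "coord_s (\<iota> c * y + \<iota> c' * y') = c * coord_s y + c' * coord_s y'"
    unfolding lincomb by (simp_all only: y y' coord_1_eq coord_s_eq)
qed

lemma coord_1_0 [simp]: "coord_1 0 = 0"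
  using coord_1_eq[of 0 0] by simp

lemma coord_1_sum:
  "(\<And>i. i \<in> A \<Longrightarrow> y i \<in> C) \<Longrightarrow> coord_1 (\<Sum>i\<in>A. \<iota> (g i) * y i) = (\<Sum>i\<in>A. g i * coord_1 (y i))"
proof (induction A rule: infinite_finite_induct)
  case (insert i A)
  have "(\<Sum>i\<in>A. \<iota> (g i) * y i) \<in> C"
    using insert.prems subfield_composite by (intro subfield_sum) (simp_all add: C_closed iota_in_C)
  then show ?case
    using insert coords_lincomb(1)[of "y i" _ "g i" 1] by simp
qed simp_all

lemma coord_1_mult_s: "e \<in> C \<Longrightarrow> coord_1 (s * e) = q * coord_s e"
proof -
  assume "e \<in> C"
  then have "s * e = \<iota> (q * coord_s e) + \<iota> (coord_1 e) * s"
    by (subst C_coords, assumption) (simp add: algebra_simps flip: s_square)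
  then show ?thesis
    by (simp only: coord_1_eq)
qed

definition iota_elem :: "'K ^ 2 \<Rightarrow> 'L" where
  "iota_elem w = \<iota> (w $ 1) + \<iota> (w $ 2) * s"

definition iota_coords :: "'L \<Rightarrow> 'K ^ 2" where
  "iota_coords y = (\<chi> j. if j = 1 then coord_1 y else coord_s y)"

lemma iota_elem_in_C: "iota_elem w \<in> C"
  unfolding iota_elem_def by (rule iota_lincomb_in_C)

definition mu_elem :: "'K ^ 2 \<Rightarrow> 'L" where
  "mu_elem w = \<mu> (w $ 1) + \<mu> (w $ 2) * T"

lemma mu_elem_in_C: "mu_elem w \<in> C"
  unfolding mu_elem_def composite_mu by (intro adjoin_memI rangeI)

lemma mu_elem_bij_betw: "bij_betw mu_elem UNIV C"
proof (rule bij_betw_imageI)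
  show "inj mu_elem"
    by (rule injI) (simp add: mu_elem_def vec_eq_iff forall_2 mu_coords_unique)
  have "y \<in> range mu_elem" if "y \<in> C" for y
  proof -
    obtain x z where "y = \<mu> x + \<mu> z * T"
      using \<open>y \<in> C\<close> unfolding composite_mu adjoin_def by blast
    then have "y = mu_elem (vector [x, z])"
      by (simp add: mu_elem_def)
    then show ?thesis
      by blast
  qed
  then show "range mu_elem = C"
    using mu_elem_in_C by blast
qed

end

locale quadratic_composite_basis = quadratic_composite \<iota> \<mu> s T q
  for \<iota> \<mu> :: "'K::field \<Rightarrow> 'L::field" and s T q +
  fixes bas :: "'n::finite \<Rightarrow> 'L" and lc :: "'n \<Rightarrow> 'K \<Rightarrow> 'K" and \<beta> :: "'n \<Rightarrow> 'n \<Rightarrow> 'n \<Rightarrow> 'K"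
  assumes bas_in: "\<forall>i. bas i \<in> composite \<iota> \<mu>"
    and bas_basis: "\<forall>y\<in>composite \<iota> \<mu>. \<exists>!cf :: 'n \<Rightarrow> 'K. y = (\<Sum>i\<in>UNIV. \<iota> (cf i) * bas i)"
    and mu_expansion: "\<forall>x. \<mu> x = (\<Sum>i\<in>UNIV. \<iota> (lc i x) * bas i)"
    and bas_mult: "\<forall>i j. bas i * bas j = (\<Sum>k\<in>UNIV. \<iota> (\<beta> i j k) * bas k)"
begin

definition bas_comb :: "'K ^ 'n \<Rightarrow> 'L" where
  "bas_comb w = (\<Sum>i\<in>UNIV. \<iota> (w $ i) * bas i)"

lemma bas_comb_in_C: "bas_comb w \<in> C"
  unfolding bas_comb_def using subfield_composite bas_in
  by (intro subfield_sum) (simp_all add: C_closed iota_in_C)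

lemma bas_comb_add: "bas_comb (w + w') = bas_comb w + bas_comb w'"
  unfolding bas_comb_def by (simp add: distrib_right sum.distrib)

lemma bas_comb_scale: "bas_comb (c *s w) = \<iota> c * bas_comb w"
  unfolding bas_comb_def by (simp add: sum_distrib_left mult.assoc)

lemma bas_comb_inj: "inj bas_comb"
proof (rule injI)
  fix w w' assume eq: "bas_comb w = bas_comb w'"
  have "\<exists>!cf :: 'n \<Rightarrow> 'K. bas_comb w = (\<Sum>i\<in>UNIV. \<iota> (cf i) * bas i)"
    using bas_basis bas_comb_in_C by blast
  then have "(($) w) = (($) w')"
    using eq unfolding bas_comb_def by blast
  then show "w = w'"
    by (simp add: vec_eq_iff)
qed

lemma bas_comb_onto:
  assumes "y \<in> C"
  obtains w where "y = bas_comb w"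
proof -
  obtain cf where "y = (\<Sum>i\<in>UNIV. \<iota> (cf i) * bas i)"
    using bas_basis assms by blast
  then have "y = bas_comb (\<chi> i. cf i)"
    by (simp add: bas_comb_def)
  then show ?thesis ..
qed

lemma bas_mult_mu: "bas j * \<mu> x = (\<Sum>i\<in>UNIV. \<iota> (phi_mat \<beta> lc x $ i $ j) * bas i)"
proof -
  have "bas j * \<mu> x = (\<Sum>k\<in>UNIV. \<iota> (lc k x) * (bas j * bas k))"
    using mu_expansion by (simp add: sum_distrib_left mult.left_commute)
  also have "\<dots> = (\<Sum>k\<in>UNIV. \<iota> (lc k x) * (\<Sum>i\<in>UNIV. \<iota> (\<beta> j k i) * bas i))"
    using bas_mult by simp
  also have "\<dots> = (\<Sum>k\<in>UNIV. \<Sum>i\<in>UNIV. \<iota> (\<beta> j k i * lc k x) * bas i)"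
    by (simp add: sum_distrib_left ac_simps)
  also have "\<dots> = (\<Sum>i\<in>UNIV. \<iota> (phi_mat \<beta> lc x $ i $ j) * bas i)"
    unfolding phi_mat_def by (subst sum.swap) (simp add: sum_distrib_right)
  finally show ?thesis .
qed

text \<open>This identifies \<open>C\<close> with the row space \<open>K\<^sup>n\<close> so that multiplication by \<open>\<mu> x\<close> becomes
  right multiplication by \<open>phi_mat \<beta> lc x\<close>.\<close>
definition dual_coords :: "'L \<Rightarrow> 'K ^ 'n" where
  "dual_coords e = (\<chi> i. coord_1 (bas i * e))"

lemma coord_1_bas_comb_mult:
  assumes "e \<in> C"
  shows "coord_1 (bas_comb w * e) = (\<Sum>i\<in>UNIV. w $ i * dual_coords e $ i)"
proof -
  have "bas_comb w * e = (\<Sum>i\<in>UNIV. \<iota> (w $ i) * (bas i * e))"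
    unfolding bas_comb_def by (simp add: sum_distrib_right mult.assoc)
  then show ?thesis
    using assms bas_in by (simp add: coord_1_sum C_closed dual_coords_def)
qed

lemma dual_coords_mult_mu:
  assumes "e \<in> C"
  shows "dual_coords (\<mu> x * e) = dual_coords e v* phi_mat \<beta> lc x"
proof -
  have "bas j * \<mu> x = bas_comb (\<chi> i. phi_mat \<beta> lc x $ i $ j)" for j
    unfolding bas_mult_mu bas_comb_def by simp
  then have "coord_1 (bas j * (\<mu> x * e)) = (\<Sum>i\<in>UNIV. phi_mat \<beta> lc x $ i $ j * dual_coords e $ i)" for j
    using coord_1_bas_comb_mult[OF assms] by (simp flip: mult.assoc)
  then show ?thesis
    by (simp add: vec_eq_iff dual_coords_def vector_matrix_mult_def mult.commute)
qed

lemma dual_coords_lincomb: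
  assumes "e \<in> C" "e' \<in> C"
  shows "dual_coords (\<iota> c * e + \<iota> c' * e') = c *s dual_coords e + c' *s dual_coords e'"
proof -
  have "bas i * (\<iota> c * e + \<iota> c' * e') = \<iota> c * (bas i * e) + \<iota> c' * (bas i * e')" for i
    by (simp add: algebra_simps)
  then show ?thesis
    using assms bas_in by (simp add: vec_eq_iff dual_coords_def coords_lincomb C_closed)
qed

text \<open>The pairing \<open>(y, e) \<mapsto> coord_1 (y e)\<close> on \<open>C\<close> is nondegenerate: test against \<open>1\<close> and \<open>s\<close>.\<close>
lemma dual_coords_eq_0:
  assumes e: "e \<in> C" and "dual_coords e = 0"
  shows "e = 0"
proof -
  have pairing: "coord_1 (y * e) = 0" if y: "y \<in> C" for y
  proof -
    obtain w where "y = bas_comb w"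
      using bas_comb_onto[OF y] by blast
    then show ?thesis
      using coord_1_bas_comb_mult[OF e, of w] assms(2) by simp
  qed
  have "coord_1 e = 0"
    using pairing[of 1] iota_in_C[of 1] by simp
  moreover have "coord_s e = 0"
    using pairing[of s] e coord_1_mult_s q_nonzero iota_lincomb_in_C[of 0 1] by simp
  ultimately show "e = 0"
    using C_coords[OF e] by simp
qed

lemma iota_coords_bas_comb_linear: "Vector_Spaces.linear (*s) (*s) (iota_coords \<circ> bas_comb)"
proof unfold_locales
  fix w w' :: "'K ^ 'n" and c :: 'K
  show "(iota_coords \<circ> bas_comb) (w + w') = (iota_coords \<circ> bas_comb) w + (iota_coords \<circ> bas_comb) w'"
    using coords_lincomb[OF bas_comb_in_C bas_comb_in_C, of 1 w 1 w']
    by (simp add: vec_eq_iff iota_coords_def bas_comb_add)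
  show "(iota_coords \<circ> bas_comb) (c *s w) = c *s (iota_coords \<circ> bas_comb) w"
    using coords_lincomb[OF bas_comb_in_C bas_comb_in_C, of c w 0 w]
    by (simp add: vec_eq_iff iota_coords_def bas_comb_scale)
qed

lemma iota_coords_bas_comb_inj: "inj (iota_coords \<circ> bas_comb)"
proof (rule injI)
  fix w w' assume eq: "(iota_coords \<circ> bas_comb) w = (iota_coords \<circ> bas_comb) w'"
  have "coord_1 (bas_comb w) = coord_1 (bas_comb w')" "coord_s (bas_comb w) = coord_s (bas_comb w')"
    using arg_cong[OF eq, of "\<lambda>v. v $ 1"] arg_cong[OF eq, of "\<lambda>v. v $ 2"]
    by (simp_all add: iota_coords_def)
  then have "bas_comb w = bas_comb w'"
    using C_coords[OF bas_comb_in_C] by metis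
  then show "w = w'"
    using bas_comb_inj by (simp add: inj_eq)
qed

lemma dual_coords_iota_elem_linear: "Vector_Spaces.linear (*s) (*s) (dual_coords \<circ> iota_elem)"
proof unfold_locales
  fix w w' :: "'K ^ 2" and c :: 'K
  have "iota_elem (w + w') = \<iota> 1 * iota_elem w + \<iota> 1 * iota_elem w'"
    unfolding iota_elem_def by (simp add: algebra_simps)
  then show "(dual_coords \<circ> iota_elem) (w + w') = (dual_coords \<circ> iota_elem) w + (dual_coords \<circ> iota_elem) w'"
    using dual_coords_lincomb[OF iota_elem_in_C iota_elem_in_C, of 1 w 1 w'] by simp
  have "iota_elem (c *s w) = \<iota> c * iota_elem w + \<iota> 0 * iota_elem w"
    unfolding iota_elem_def by (simp add: algebra_simps)
  then show "(dual_coords \<circ> iota_elem) (c *s w) = c *s (dual_coords \<circ> iota_elem) w"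
    using dual_coords_lincomb[OF iota_elem_in_C iota_elem_in_C, of c w 0 w] by simp
qed

lemma dual_coords_iota_elem_inj: "inj (dual_coords \<circ> iota_elem)"
proof -
  have "w = 0" if "dual_coords (iota_elem w) = 0" for w
  proof -
    have "\<iota> (w $ 1) + \<iota> (w $ 2) * s = 0"
      using dual_coords_eq_0[OF iota_elem_in_C] that unfolding iota_elem_def by simp
    then show "w = 0"
      using iota_coords_unique[of "w $ 1" "w $ 2" 0 0] by (simp add: vec_eq_iff forall_2)
  qed
  then show ?thesis
    using vec.linear_inj_iff_eq_0[OF dual_coords_iota_elem_linear] by simp
qed

lemma CARD_eq_2: "CARD('n) = 2"
  using vec_linear_inj_card_le[OF iota_coords_bas_comb_linear iota_coords_bas_comb_inj]
    vec_linear_inj_card_le[OF dual_coords_iota_elem_linear dual_coords_iota_elem_inj]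
  by simp

lemma dual_coords_onto: "\<exists>e\<in>C. dual_coords e = v"
proof -
  have "surj (dual_coords \<circ> iota_elem)"
    using CARD_eq_2 by (intro vec_linear_inj_imp_surj dual_coords_iota_elem_linear dual_coords_iota_elem_inj) simp
  then obtain w where "dual_coords (iota_elem w) = v"
    by (metis comp_apply surjD)
  then show ?thesis
    using iota_lincomb_in_C unfolding iota_elem_def by blast
qed

lemma dual_coords_bij_betw: "bij_betw dual_coords C UNIV"
proof -
  have "inj_on dual_coords C"
  proof (rule inj_onI)
    fix e e' assume "e \<in> C" "e' \<in> C" "dual_coords e = dual_coords e'"
    then have "dual_coords (e - e') = 0"
      using dual_coords_lincomb[of e e' 1 "- 1"] by simp
    moreover have "e - e' \<in> C"
      using subfield_diff[OF subfield_composite] \<open>e \<in> C\<close> \<open>e' \<in> C\<close> .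
    ultimately show "e = e'"
      using dual_coords_eq_0 by fastforce
  qed
  then show ?thesis
    using dual_coords_onto unfolding bij_betw_def by (metis UNIV_eq_I imageI)
qed

definition right_iso :: "'K ^ 2 \<Rightarrow> 'K ^ 'n" where
  "right_iso w = dual_coords (mu_elem w)"

lemma right_iso_bij: "bij right_iso"
  using bij_betw_trans[OF mu_elem_bij_betw dual_coords_bij_betw]
  unfolding right_iso_def bij_def by (simp add: comp_def bij_betw_def)

lemma right_iso_add: "right_iso (w + w') = right_iso w + right_iso w'"
proof -
  have "mu_elem (w + w') = \<iota> 1 * mu_elem w + \<iota> 1 * mu_elem w'"
    unfolding mu_elem_def by (simp add: algebra_simps)
  then show ?thesis
    unfolding right_iso_def using dual_coords_lincomb[OF mu_elem_in_C mu_elem_in_C, of 1 w 1 w'] by simp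
qed

lemma right_iso_scale: "right_iso (x *s w) = right_iso w v* phi_mat \<beta> lc x"
proof -
  have "mu_elem (x *s w) = \<mu> x * mu_elem w"
    unfolding mu_elem_def by (simp add: algebra_simps)
  then show ?thesis
    unfolding right_iso_def using dual_coords_mult_mu[OF mu_elem_in_C] by simp
qed

theorem rank_eq_2: "left_dim (phi_mat \<beta> lc) = 2 \<and> right_dim (phi_mat \<beta> lc) = 2"
proof
  show "left_dim (phi_mat \<beta> lc) = 2"
    by (simp add: left_dim_def vec.dim_UNIV card_cart_basis CARD_eq_2)
  show "right_dim (phi_mat \<beta> lc) = 2"
    unfolding right_dim_def
    by (rule vector_space_transport(2)[OF right_iso_bij right_iso_add right_iso_scale, simplified])
qed

end

section \<open>The embedding \<open>t \<mapsto> \<alpha> + \<surd>(N/D)\<close>\<close>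

locale sqrt_quadratic_embedding =
  fixes \<iota> :: "'k::field_char_0 ratfun \<Rightarrow> 'L::field" and \<mu> :: "'k ratfun \<Rightarrow> 'L"
    and \<alpha>0 a b c d e f :: 'k
  assumes iota_hom: "is_ring_hom \<iota>" and emb: "\<mu> \<in> Emb \<iota>"
    and ad: "a \<noteq> 0 \<or> d \<noteq> 0" and ae: "a * e = b * d" and af: "a * f \<noteq> c * d"
    and disc_num: "b\<^sup>2 \<noteq> 4 * a * c" and disc_den: "e\<^sup>2 \<noteq> 4 * d * f"
    and mu_t: "\<exists>s. s\<^sup>2 = \<iota> (rf_quadratic a b c rf_t / rf_quadratic d e f rf_t)
                   \<and> \<mu> rf_t = \<iota> (rf_const \<alpha>0) + s"
begin

sublocale iota: field_hom \<iota> by (fact field_hom.intro[OF iota_hom])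
sublocale mu: field_hom \<mu> using emb unfolding Emb_def by (simp add: field_hom.intro)

definition q :: "'k ratfun" where
  "q = rf_quadratic a b c rf_t / rf_quadratic d e f rf_t"

definition s :: 'L where
  "s = \<mu> rf_t - \<iota> (rf_const \<alpha>0)"

lemma a_nonzero: "a \<noteq> 0"
proof
  assume "a = 0"
  with ad ae have "b = 0"
    by simp
  with \<open>a = 0\<close> disc_num show False
    by simp
qed

lemma d_nonzero: "d \<noteq> 0"
proof
  assume "d = 0"
  with ad ae have "e = 0"
    by simp
  with \<open>d = 0\<close> disc_den show False
    by simp
qed

lemma mu_const [simp]: "\<mu> (rf_const x) = \<iota> (rf_const x)"
proof -
  have "\<mu> (rf_const x * 1) = \<iota> (rf_const x) * \<mu> 1"
    using emb unfolding Emb_def by blast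
  then show ?thesis
    by simp
qed

lemma mu_rf_quadratic: "\<mu> r = \<iota> x \<Longrightarrow> \<mu> (rf_quadratic a' b' c' r) = \<iota> (rf_quadratic a' b' c' x)"
  by (simp add: rf_quadratic_def)

lemma s_square: "s * s = \<iota> q"
  using mu_t unfolding s_def q_def by (auto simp: power2_eq_square)

lemma s_eq_mu: "s = \<mu> (rf_t - rf_const \<alpha>0)"
  by (simp add: s_def)

lemma mu_shifted_square: "\<mu> ((rf_t - rf_const \<alpha>0)\<^sup>2) = \<iota> q"
  using s_square unfolding s_eq_mu by (simp add: power2_eq_square)

lemma s_notin: "s \<notin> range \<iota>"
proof
  assume "s \<in> range \<iota>"
  then obtain r where "s = \<iota> r"
    by blast
  then have "r\<^sup>2 = q"
    using s_square by (simp add: power2_eq_square flip: iota.hom_mult)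
  then show False
    using rf_quadratic_ratio_not_square[OF a_nonzero d_nonzero af disc_num] unfolding q_def by blast
qed

lemma t_notin: "\<iota> rf_t \<notin> range \<mu>"
proof
  assume "\<iota> rf_t \<in> range \<mu>"
  then obtain r where r: "\<mu> r = \<iota> rf_t"
    by (metis rangeE)
  have "\<mu> ((rf_t - rf_const \<alpha>0)\<^sup>2) = \<mu> (rf_quadratic a b c r / rf_quadratic d e f r)"
    unfolding mu_shifted_square q_def by (simp add: mu_rf_quadratic[OF r])
  then have "(rf_t - rf_const \<alpha>0)\<^sup>2 = rf_quadratic a b c r / rf_quadratic d e f r"
    by (simp only: mu.hom_eq_iff)
  with rf_shifted_square_ne_quadratic_ratio[OF a_nonzero d_nonzero ae af] show False
    by blast
qed

lemma q_mult_denominator: "q * rf_quadratic d e f rf_t = rf_quadratic a b c rf_t"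
proof -
  have "rf_quadratic d e f rf_t \<noteq> 0"
    using d_nonzero by (simp add: rf_quadratic_t Zero_fract_def eq_fract)
  then show ?thesis
    by (simp add: q_def)
qed

lemma leading_coeff_nonzero: "rf_const a - (rf_t - rf_const \<alpha>0)\<^sup>2 * rf_const d \<noteq> 0"
proof
  assume "rf_const a - (rf_t - rf_const \<alpha>0)\<^sup>2 * rf_const d = 0"
  moreover have "rf_const d \<noteq> (0 :: 'k ratfun)"
    using d_nonzero by (simp add: rf_const_def Zero_fract_def eq_fract)
  ultimately have "(rf_t - rf_const \<alpha>0)\<^sup>2 = rf_const a / rf_const d"
    by (simp add: field_simps)
  then have "\<iota> q = \<iota> (rf_const a / rf_const d)"
    using mu_shifted_square by simp
  then have "q = rf_const a / rf_const d"
    by (simp only: iota.hom_eq_iff)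
  then show False
    using rf_quadratic_ratio_ne_const_ratio[OF a_nonzero d_nonzero af] unfolding q_def by blast
qed

text \<open>With \<open>p = (t - \<alpha>)\<^sup>2\<close>, clearing denominators in \<open>\<mu>(p) = N(T)/D(T)\<close> gives
  \<open>\<mu>(a - p d) T\<^sup>2 = \<mu>(p e - b) T + \<mu>(p f - c)\<close>.\<close>
lemma t_quadratic:
  obtains A B where "A \<in> range \<mu>" "B \<in> range \<mu>" "\<iota> rf_t * \<iota> rf_t = A + B * \<iota> rf_t"
proof -
  define p where "p = (rf_t - rf_const \<alpha>0)\<^sup>2"
  define L where "L = rf_const a - p * rf_const d"
  define A where "A = (p * rf_const f - rf_const c) / L"
  define B where "B = (p * rf_const e - rf_const b) / L"
  have "L \<noteq> 0"
    using leading_coeff_nonzero unfolding L_def p_def .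
  then have LAB: "L * A = p * rf_const f - rf_const c" "L * B = p * rf_const e - rf_const b"
    by (simp_all add: A_def B_def)
  have "\<mu> L * (\<mu> A + \<mu> B * \<iota> rf_t) = \<mu> (L * A) + \<mu> (L * B) * \<iota> rf_t"
    by (simp add: algebra_simps)
  also have "\<dots> = \<mu> (p * rf_const f - rf_const c) + \<mu> (p * rf_const e - rf_const b) * \<iota> rf_t"
    unfolding LAB ..
  finally have "\<mu> L * (\<mu> A + \<mu> B * \<iota> rf_t)
      = \<mu> (p * rf_const f - rf_const c) + \<mu> (p * rf_const e - rf_const b) * \<iota> rf_t" .
  moreover have "\<mu> L * (\<iota> rf_t * \<iota> rf_t)
      - (\<mu> (p * rf_const f - rf_const c) + \<mu> (p * rf_const e - rf_const b) * \<iota> rf_t)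
      = \<iota> (rf_quadratic a b c rf_t) - \<iota> q * \<iota> (rf_quadratic d e f rf_t)"
    using mu_shifted_square unfolding p_def[symmetric]
    by (simp add: L_def rf_quadratic_def power2_eq_square algebra_simps)
  moreover have "\<iota> q * \<iota> (rf_quadratic d e f rf_t) = \<iota> (rf_quadratic a b c rf_t)"
    using arg_cong[OF q_mult_denominator, of \<iota>] by simp
  ultimately have "\<mu> L * (\<iota> rf_t * \<iota> rf_t) = \<mu> L * (\<mu> A + \<mu> B * \<iota> rf_t)"
    by simp
  then have "\<iota> rf_t * \<iota> rf_t = \<mu> A + \<mu> B * \<iota> rf_t"
    using \<open>L \<noteq> 0\<close> by simp
  then show ?thesis
    using that by blast
qed

lemma composite_iota: "composite \<iota> \<mu> = adjoin (range \<iota>) s"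
proof (rule composite_eq_adjoin[OF iota_hom])
  have "s * s = \<iota> q + \<iota> 0 * s"
    using s_square by simp
  then show adjoin: "is_subfield (adjoin (range \<iota>) s)"
    by (rule subfield_adjoin[OF iota.subfield_range rangeI rangeI _ s_notin])
  show "s \<in> composite \<iota> \<mu>"
    unfolding s_def using range_subset_composite[of \<iota> \<mu>] subfield_composite[of \<iota> \<mu>]
    by (intro subfield_diff) (auto simp: image_subset_iff)
  have "\<iota> (rf_const x) + \<iota> 0 * s \<in> adjoin (range \<iota>) s" "\<iota> (rf_const \<alpha>0) + \<iota> 1 * s \<in> adjoin (range \<iota>) s" for x
    by (intro adjoin_memI rangeI)+
  then show "range \<mu> \<subseteq> adjoin (range \<iota>) s"
    using ratfun_hom_in_subfield[OF mu.hom adjoin] by (auto simp: s_def)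
qed

lemma composite_mu: "composite \<iota> \<mu> = adjoin (range \<mu>) (\<iota> rf_t)"
proof -
  obtain A B where AB: "A \<in> range \<mu>" "B \<in> range \<mu>" "\<iota> rf_t * \<iota> rf_t = A + B * \<iota> rf_t"
    by (rule t_quadratic)
  have adjoin: "is_subfield (adjoin (range \<mu>) (\<iota> rf_t))"
    using AB t_notin by (intro subfield_adjoin mu.subfield_range)
  have "\<mu> (rf_const x) + \<mu> 0 * \<iota> rf_t \<in> adjoin (range \<mu>) (\<iota> rf_t)"
    "\<mu> 0 + \<mu> 1 * \<iota> rf_t \<in> adjoin (range \<mu>) (\<iota> rf_t)" for x
    by (intro adjoin_memI rangeI)+
  then have "range \<iota> \<subseteq> adjoin (range \<mu>) (\<iota> rf_t)"
    using ratfun_hom_in_subfield[OF iota.hom adjoin] by auto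
  then show ?thesis
    using composite_eq_adjoin[OF mu.hom adjoin] range_subset_composite[of \<iota> \<mu>]
    by (simp add: composite_commute image_subset_iff)
qed

sublocale quadratic_composite \<iota> \<mu> s "\<iota> rf_t" q
  using s_square s_notin t_notin composite_iota composite_mu
  by unfold_locales (simp_all add: iota.hom mu.hom)

end

theorem proposition1p3:
  fixes \<iota> :: "'k::field_char_0 ratfun \<Rightarrow> 'L::field"
    and \<mu> :: "'k ratfun \<Rightarrow> 'L"
    and \<alpha>0 a b c d e f :: 'k
    and bas :: "'n::finite \<Rightarrow> 'L"
    and lc :: "'n \<Rightarrow> 'k ratfun \<Rightarrow> 'k ratfun"
    and \<beta> :: "'n \<Rightarrow> 'n \<Rightarrow> 'n \<Rightarrow> 'k ratfun"
  assumes closure: "is_alg_closure \<iota>"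
    and ad: "a \<noteq> 0 \<or> d \<noteq> 0"
    and h1: "a * e = b * d"
    and h2: "a * f \<noteq> c * d"
    and h3: "b^2 \<noteq> 4 * a * c"
    and h4: "e^2 \<noteq> 4 * d * f"
    and emb: "\<mu> \<in> Emb \<iota>"
    and lam_t: "\<exists>s. s^2 = \<iota> ((rf_const a * rf_t^2 + rf_const b * rf_t + rf_const c)
                            / (rf_const d * rf_t^2 + rf_const e * rf_t + rf_const f))
                   \<and> \<mu> rf_t = \<iota> (rf_const \<alpha>0) + s"
    and card_orbit: "CARD('n) = card (orbit \<iota> \<mu>)"
    and bas_in: "\<forall>i. bas i \<in> composite \<iota> \<mu>"
    and bas_basis: "\<forall>y\<in>composite \<iota> \<mu>. \<exists>!cf :: 'n \<Rightarrow> 'k ratfun. y = (\<Sum>i\<in>UNIV. \<iota> (cf i) * bas i)"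
    and lc_def: "\<forall>x. \<mu> x = (\<Sum>i\<in>UNIV. \<iota> (lc i x) * bas i)"
    and \<beta>_def: "\<forall>i j. bas i * bas j = (\<Sum>k\<in>UNIV. \<iota> (\<beta> i j k) * bas k)"
  shows "left_dim (phi_mat \<beta> lc) = 2 \<and> right_dim (phi_mat \<beta> lc) = 2"
proof -
  have "is_ring_hom \<iota>"
    using closure by (simp add: is_alg_closure_def)
  interpret sqrt_quadratic_embedding \<iota> \<mu> \<alpha>0 a b c d e f
    using \<open>is_ring_hom \<iota>\<close> emb ad h1 h2 h3 h4 lam_t[folded rf_quadratic_def] by unfold_locales
  interpret quadratic_composite_basis \<iota> \<mu> s "\<iota> rf_t" q bas lc \<beta>
    using bas_in bas_basis lc_def \<beta>_def by unfold_locales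
  show ?thesis
    by (rule rank_eq_2)
qed

end
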